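(* Let $H$ be a $k$-uniform hypergraph and $d$ a positive integer. The toric ideal $I_H$ is generated in degree at most $d$ if and only if for every primitive monomial walk $\mathcal W$ of length $2n>2d$ with $\operatorname{supp}(\mathcal W)\subseteq E(H)$, one of the following two conditions holds: (i) there exists a proper splitting set $S$ of $\mathcal W$; or (ii) there is a finite sequence of pairs $(S_1,R_1),\dots,(S_N,R_N)$ of multisets of edges such that - $S_1$ and $R_1$ are, respectively, a blue splitting set and a red splitting set of $\mathcal W$, each of size less than $n$, with decompositions $(\Gamma_{1,1},S_1,\Gamma_{2,1})$ and $(\Upsilon_{1,1},R_1,\Upsilon_{2,1})$ respectively; - for each $1\le i<N$, $S_{i+1}$ and $R_{i+1}$ are, respectively, a blue splitting set and a red splitting set of $\mathcal W_i$, each of size less than $n$, with decompositions $(\Gamma_{1,i+1},S_{i+1},\Gamma_{2,i+1})$ and $(\Upsilon_{1,i+1},R_{i+1},\Upsilon_{2,i+1})$ respectively, where for each $i$, $\mathcal W_i$ denotes the bicolored multiset whose blue part is $(\Gamma_{2,i})_{blue}$ and whose red part is $(\Upsilon_{1,i})_{red}$; - $S_N\cap R_N\neq\emptyset$, or there exists a proper splitting set of $\mathcal W_N$.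
   Context: A hypergraph $H$ has vertex set $V=\{1,\dots,m\}$ and a set $E(H)$ of edges, each a nonempty subset of $V$ (no repeated edges); it is $k$-uniform if every edge has exactly $k$ elements. For a field $K$, the toric ideal $I_H$ is the kernel of $\phi_H: K[t_e : e\in E(H)]\to K[x_1,\dots,x_m]$, $t_e\mapsto\prod_{j\in e}x_j$; "generated in degree at most $d$" means $I_H$ is generated by its elements of degree at most $d$. Multisets of edges: $|M|$ is the size counted with multiplicity (the "size" of $M$); $\operatorname{supp}(M)$ is the set of distinct elements; $M_1\sqcup M_2$ adds multiplicities; $M_1\cap M_2$ takes minimum multiplicities; $M_2\subseteq M_1$ is multiplicity-wise containment, and $M_2$ is a proper submultiset of $M_1$ if moreover $M_2\neq M_1$. A balanced edge set $\mathcal E$ is a pair of finite multisets $\mathcal E_{blue},\mathcal E_{red}$ of edges of $H$ such that every vertex lies in the same number of blue as red edges, counted with multiplicity; $\operatorname{supp}(\mathcal E)=\operatorname{supp}(\mathcal E_{blue}\sqcup\mathcal E_{red})$, and its length/size is $|\mathcal E|=|\mathcal E_{blue}|+|\mathcal E_{red}|$. For uniform $H$, balanced edge sets are called monomial walks. A balanced edge set $\mathcal E$ is primitive if there is no other balanced edge set $\mathcal E'$ with $\mathcal E'_{blue}\subsetneq\mathcal E_{blue}$ and $\mathcal E'_{red}\subsetneq\mathcal E_{red}$. A balanced edge set $\mathcal F$ is reducible with separator $S$ and decomposition $(\Gamma_1,S,\Gamma_2)$ if $S$ is a nonempty multiset with $\operatorname{supp}(S)\subseteq\operatorname{supp}(\mathcal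 F)$ and there are balanced edge sets $\Gamma_1\neq\mathcal F$, $\Gamma_2\neq\mathcal F$ with $S=\Gamma_{1,red}\cap\Gamma_{2,blue}$, $\mathcal F_{blue}\sqcup\mathcal F_{red}=\Gamma_{1,blue}\sqcup\Gamma_{1,red}\sqcup\Gamma_{2,blue}\sqcup\Gamma_{2,red}$, $\Gamma_{1,red},\Gamma_{2,red}\subseteq\mathcal F_{red}$ and $\Gamma_{1,blue},\Gamma_{2,blue}\subseteq\mathcal F_{blue}$. $S$ is proper with respect to $(\Gamma_1,S,\Gamma_2)$ if $S$ is a proper submultiset of both $\Gamma_{1,red}$ and $\Gamma_{2,blue}$; if not proper, $S$ is blue with respect to $(\Gamma_1,S,\Gamma_2)$ if $\Gamma_{1,red}=S$ and red if $\Gamma_{2,blue}=S$. For a bicolored multiset $\mathcal E$ and a multiset $S$ of edges, $\mathcal E+S$ has blue part $\mathcal E_{blue}\sqcup S$ and red part $\mathcal E_{red}\sqcup S$. A nonempty multiset $S$ with $\operatorname{supp}(S)\subseteq E(H)$ is a splitting set of $\mathcal E$ with decomposition $(\Gamma_1,S,\Gamma_2)$ if $\mathcal E+S$ is reducible with separator $S$ and decomposition $(\Gamma_1,S,\Gamma_2)$; it is a blue (resp. red) splitting set with respect to this decomposition if $S$ is a blue (resp. red) separator of $\mathcal E+S$ with respect to it; it is a proper splitting set of $\mathcal E$ if there is a decomposition of $\mathcal E+S$ with respect to which $S$ is proper. *)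

theory Defs
  imports "HOL-Library.Multiset" "HOL-Library.Poly_Mapping"
begin

definition hypergraph :: "nat \<Rightarrow> nat set set \<Rightarrow> bool" where
  "hypergraph m E \<longleftrightarrow> (\<forall>e\<in>E. e \<noteq> {} \<and> e \<subseteq> {1..m})"

definition uniform :: "nat \<Rightarrow> nat set set \<Rightarrow> bool" where
  "uniform k E \<longleftrightarrow> (\<forall>e\<in>E. card e = k)"

text \<open>Polynomials over a field 'k in the variables t_e (e an edge) are
represented as finitely supported maps from monomials (finitely supported
exponent maps edge => nat) to coefficients; polynomials in x_1..x_m likewise
with variables indexed by nat.\<close>

type_synonym 'k tpoly = "(nat set \<Rightarrow>\<^sub>0 nat) \<Rightarrow>\<^sub>0 'k"
type_synonym 'k xpoly = "(nat \<Rightarrow>\<^sub>0 nat) \<Rightarrow>\<^sub>0 'k"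

definition tpoly_ring :: "nat set set \<Rightarrow> ('k::field) tpoly set" where
  "tpoly_ring E = {p. \<forall>mo\<in>Poly_Mapping.keys p. Poly_Mapping.keys mo \<subseteq> E}"

definition edge_mon_image :: "(nat set \<Rightarrow>\<^sub>0 nat) \<Rightarrow> (nat \<Rightarrow>\<^sub>0 nat)" where
  "edge_mon_image mo = (\<Sum>e\<in>Poly_Mapping.keys mo. \<Sum>j\<in>e. Poly_Mapping.single j (Poly_Mapping.lookup mo e))"

text \<open>The K-algebra map phi_H : t_e |-> prod_(j in e) x_j.\<close>
definition toric_map :: "('k::field) tpoly \<Rightarrow> 'k xpoly" where
  "toric_map p = (\<Sum>mo\<in>Poly_Mapping.keys p. Poly_Mapping.single (edge_mon_image mo) (Poly_Mapping.lookup p mo))"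

definition toric_ideal :: "nat set set \<Rightarrow> ('k::field) tpoly set" where
  "toric_ideal E = {p \<in> tpoly_ring E. toric_map p = 0}"

definition mon_deg :: "('a \<Rightarrow>\<^sub>0 nat) \<Rightarrow> nat" where
  "mon_deg mo = (\<Sum>v\<in>Poly_Mapping.keys mo. Poly_Mapping.lookup mo v)"

definition tdeg :: "('k::field) tpoly \<Rightarrow> nat" where
  "tdeg p = (if Poly_Mapping.keys p = {} then 0 else Max (mon_deg ` Poly_Mapping.keys p))"

definition ideal_gen_in :: "('k::field) tpoly set \<Rightarrow> 'k tpoly set \<Rightarrow> 'k tpoly set" where
  "ideal_gen_in R G = {p. \<exists>F c. finite F \<and> F \<subseteq> G \<and> (\<forall>g\<in>F. c g \<in> R) \<and> p = (\<Sum>g\<in>F. c g * g)}"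

definition generated_in_degree_at_most :: "nat set set \<Rightarrow> nat \<Rightarrow> ('k::field) itself \<Rightarrow> bool" where
  "generated_in_degree_at_most E d (_ :: 'k itself) \<longleftrightarrow>
     (toric_ideal E :: 'k tpoly set) =
       ideal_gen_in (tpoly_ring E) {p \<in> toric_ideal E. tdeg p \<le> d}"

type_synonym bicol = "nat set multiset \<times> nat set multiset"

abbreviation blue :: "bicol \<Rightarrow> nat set multiset" where "blue \<equiv> fst"
abbreviation red :: "bicol \<Rightarrow> nat set multiset" where "red \<equiv> snd"

definition vdeg :: "nat set multiset \<Rightarrow> nat \<Rightarrow> nat" where
  "vdeg M v = size (filter_mset (\<lambda>e. v \<in> e) M)"

definition bsupp :: "bicol \<Rightarrow> nat set set" where
  "bsupp \<E> = set_mset (blue \<E> + red \<E>)"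

definition bsize :: "bicol \<Rightarrow> nat" where
  "bsize \<E> = size (blue \<E>) + size (red \<E>)"

definition balanced :: "nat set set \<Rightarrow> bicol \<Rightarrow> bool" where
  "balanced E \<E> \<longleftrightarrow> bsupp \<E> \<subseteq> E \<and> (\<forall>v. vdeg (blue \<E>) v = vdeg (red \<E>) v)"

definition primitive :: "nat set set \<Rightarrow> bicol \<Rightarrow> bool" where
  "primitive E \<E> \<longleftrightarrow> balanced E \<E> \<and>
     \<not> (\<exists>\<E>'. balanced E \<E>' \<and> \<E>' \<noteq> ({#}, {#}) \<and> \<E>' \<noteq> \<E> \<and>
            blue \<E>' \<subset># blue \<E> \<and> red \<E>' \<subset># red \<E>)"

definition reducible_with :: "nat set set \<Rightarrow> bicol \<Rightarrow> bicol \<Rightarrow> nat set multiset \<Rightarrow> bicol \<Rightarrow> bool" where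
  "reducible_with E \<F> \<Gamma>1 S \<Gamma>2 \<longleftrightarrow>
     balanced E \<F> \<and> S \<noteq> {#} \<and> set_mset S \<subseteq> bsupp \<F> \<and>
     balanced E \<Gamma>1 \<and> balanced E \<Gamma>2 \<and> \<Gamma>1 \<noteq> \<F> \<and> \<Gamma>2 \<noteq> \<F> \<and>
     S = red \<Gamma>1 \<inter># blue \<Gamma>2 \<and>
     blue \<F> + red \<F> = blue \<Gamma>1 + red \<Gamma>1 + blue \<Gamma>2 + red \<Gamma>2 \<and>
     red \<Gamma>1 \<subseteq># red \<F> \<and> red \<Gamma>2 \<subseteq># red \<F> \<and>
     blue \<Gamma>1 \<subseteq># blue \<F> \<and> blue \<Gamma>2 \<subseteq># blue \<F>"

definition proper_sep :: "bicol \<Rightarrow> nat set multiset \<Rightarrow> bicol \<Rightarrow> bool" where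
  "proper_sep \<Gamma>1 S \<Gamma>2 \<longleftrightarrow> S \<subset># red \<Gamma>1 \<and> S \<subset># blue \<Gamma>2"

definition blue_sep :: "bicol \<Rightarrow> nat set multiset \<Rightarrow> bicol \<Rightarrow> bool" where
  "blue_sep \<Gamma>1 S \<Gamma>2 \<longleftrightarrow> \<not> proper_sep \<Gamma>1 S \<Gamma>2 \<and> red \<Gamma>1 = S"

definition red_sep :: "bicol \<Rightarrow> nat set multiset \<Rightarrow> bicol \<Rightarrow> bool" where
  "red_sep \<Gamma>1 S \<Gamma>2 \<longleftrightarrow> \<not> proper_sep \<Gamma>1 S \<Gamma>2 \<and> blue \<Gamma>2 = S"

definition add_both :: "bicol \<Rightarrow> nat set multiset \<Rightarrow> bicol" where
  "add_both \<E> S = (blue \<E> + S, red \<E> + S)"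

definition splitting_set_with :: "nat set set \<Rightarrow> bicol \<Rightarrow> bicol \<Rightarrow> nat set multiset \<Rightarrow> bicol \<Rightarrow> bool" where
  "splitting_set_with E \<E> \<Gamma>1 S \<Gamma>2 \<longleftrightarrow>
     S \<noteq> {#} \<and> set_mset S \<subseteq> E \<and> reducible_with E (add_both \<E> S) \<Gamma>1 S \<Gamma>2"

definition blue_splitting_set_with :: "nat set set \<Rightarrow> bicol \<Rightarrow> bicol \<Rightarrow> nat set multiset \<Rightarrow> bicol \<Rightarrow> bool" where
  "blue_splitting_set_with E \<E> \<Gamma>1 S \<Gamma>2 \<longleftrightarrow> splitting_set_with E \<E> \<Gamma>1 S \<Gamma>2 \<and> blue_sep \<Gamma>1 S \<Gamma>2"

definition red_splitting_set_with :: "nat set set \<Rightarrow> bicol \<Rightarrow> bicol \<Rightarrow> nat set multiset \<Rightarrow> bicol \<Rightarrow> bool" where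
  "red_splitting_set_with E \<E> \<Gamma>1 S \<Gamma>2 \<longleftrightarrow> splitting_set_with E \<E> \<Gamma>1 S \<Gamma>2 \<and> red_sep \<Gamma>1 S \<Gamma>2"

definition proper_splitting_set :: "nat set set \<Rightarrow> bicol \<Rightarrow> nat set multiset \<Rightarrow> bool" where
  "proper_splitting_set E \<E> S \<longleftrightarrow>
     (\<exists>\<Gamma>1 \<Gamma>2. splitting_set_with E \<E> \<Gamma>1 S \<Gamma>2 \<and> proper_sep \<Gamma>1 S \<Gamma>2)"

text \<open>Condition (ii): a chain of N >= 1 pairs (S_i, R_i) with decompositions
(G1 i, S i, G2 i) and (U1 i, R i, U2 i), i = 1..N.  The walk W_0 is W and
W_i = ((G2 i)_blue, (U1 i)_red).\<close>
definition chain_walk :: "bicol \<Rightarrow> (nat \<Rightarrow> bicol) \<Rightarrow> (nat \<Rightarrow> bicol) \<Rightarrow> nat \<Rightarrow> bicol" where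
  "chain_walk W G2 U1 i = (if i = 0 then W else (blue (G2 i), red (U1 i)))"

definition splitting_chain :: "nat set set \<Rightarrow> bicol \<Rightarrow> nat \<Rightarrow> bool" where
  "splitting_chain E W n \<longleftrightarrow>
    (\<exists>N::nat. \<exists>S R :: nat \<Rightarrow> nat set multiset. \<exists>G1 G2 U1 U2 :: nat \<Rightarrow> bicol.
       N \<ge> 1 \<and>
       (\<forall>i\<in>{1..N}.
          blue_splitting_set_with E (chain_walk W G2 U1 (i - 1)) (G1 i) (S i) (G2 i) \<and>
          red_splitting_set_with E (chain_walk W G2 U1 (i - 1)) (U1 i) (R i) (U2 i) \<and>
          size (S i) < n \<and> size (R i) < n) \<and>
       (S N \<inter># R N \<noteq> {#} \<or> (\<exists>T. proper_splitting_set E (chain_walk W G2 U1 N) T)))"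

end

theory Submission
  imports Defs
begin

text \<open>
  The toric ideal is spanned by the binomials t^B - t^R of monomial walks (B, R), so it is
  generated in degree at most d iff every such binomial lies in the ideal J generated by its
  elements of degree at most d, i.e. iff B can be transformed into R by moves that exchange a
  submultiset u for a submultiset v with the same vertex degrees and size u at most d.

  Given such a path B = g_0, ..., g_2K = R, the walks (g_i, g_(2K - i)) form a splitting chain:
  the edges added by the i-th move form a blue splitting set, the edges removed by the mirrored
  move a red one, and in the middle walk (g_K, g_K) the two sets either meet or yield a proper
  splitting set.

  Conversely, by strong induction on the size of a walk: small walks and non-primitive walks
  reduce to smaller ones, a proper splitting set decomposes t^B - t^R into binomials of smaller
  walks, and each step of a splitting chain replaces a side of the walk by a J-equivalent one
  until both sides share an edge or a proper splitting set appears.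
\<close>

definition push_keys :: "('a \<Rightarrow> 'b) \<Rightarrow> ('a \<Rightarrow>\<^sub>0 'c::comm_monoid_add) \<Rightarrow> ('b \<Rightarrow>\<^sub>0 'c)" where
  "push_keys h p = (\<Sum>x\<in>Poly_Mapping.keys p. Poly_Mapping.single (h x) (Poly_Mapping.lookup p x))"

lemma push_keys_add: "push_keys h (p + q) = push_keys h p + push_keys h q"
  unfolding push_keys_def by (rule setsum_keys_plus_distrib) (auto simp: single_add)

lemma push_keys_zero [simp]: "push_keys h 0 = 0"
  by (simp add: push_keys_def)

lemma push_keys_single [simp]: "push_keys h (Poly_Mapping.single x c) = Poly_Mapping.single (h x) c"
  by (simp add: push_keys_def)

lemma push_keys_diff: "push_keys h (p - q) = push_keys h p - push_keys h (q::'a \<Rightarrow>\<^sub>0 'c::ab_group_add)"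
  using push_keys_add[of h "p - q" q] by (simp add: algebra_simps)

lemma push_keys_sum: "push_keys h (\<Sum>i\<in>I. g i) = (\<Sum>i\<in>I. push_keys h (g i))"
  by (induction I rule: infinite_finite_induct) (auto simp: push_keys_add)

lemma lookup_push_keys:
  "Poly_Mapping.lookup (push_keys h p) y = (\<Sum>x\<in>{x\<in>Poly_Mapping.keys p. h x = y}. Poly_Mapping.lookup p x)"
proof -
  have "Poly_Mapping.lookup (push_keys h p) y =
      (\<Sum>x\<in>Poly_Mapping.keys p. if h x = y then Poly_Mapping.lookup p x else 0)"
    by (simp add: push_keys_def lookup_sum lookup_single when_def)
  also have "\<dots> = (\<Sum>x\<in>{x\<in>Poly_Mapping.keys p. h x = y}. Poly_Mapping.lookup p x)"
    by (simp add: sum.inter_filter)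
  finally show ?thesis .
qed

lemma poly_mapping_sum_single:
  "p = (\<Sum>x\<in>Poly_Mapping.keys p. Poly_Mapping.single x (Poly_Mapping.lookup p x))"
  by (rule poly_mapping_eqI) (simp add: lookup_sum lookup_single when_def sum.delta in_keys_iff)

lemma poly_mapping_mult_expand:
  fixes p q :: "('a::monoid_add) \<Rightarrow>\<^sub>0 ('b::comm_semiring_1)"
  shows "p * q = (\<Sum>a\<in>Poly_Mapping.keys p. \<Sum>b\<in>Poly_Mapping.keys q.
    Poly_Mapping.single (a + b) (Poly_Mapping.lookup p a * Poly_Mapping.lookup q b))"
  by (subst (1 2) poly_mapping_sum_single) (simp add: sum_product mult_single)

lemma push_keys_mult:
  fixes p q :: "('a::monoid_add) \<Rightarrow>\<^sub>0 ('c::comm_semiring_1)"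
  assumes "\<And>a b. h (a + b) = h a + (h b :: 'b::monoid_add)"
  shows "push_keys h (p * q) = push_keys h p * push_keys h q"
proof -
  have "push_keys h (p * q) = (\<Sum>a\<in>Poly_Mapping.keys p. \<Sum>b\<in>Poly_Mapping.keys q.
      Poly_Mapping.single (h a + h b) (Poly_Mapping.lookup p a * Poly_Mapping.lookup q b))"
    by (subst poly_mapping_mult_expand) (simp add: push_keys_sum assms)
  also have "\<dots> = push_keys h p * push_keys h q"
    by (simp add: push_keys_def sum_product mult_single)
  finally show ?thesis .
qed

definition coeff_sum :: "'a set \<Rightarrow> ('a \<Rightarrow>\<^sub>0 'k::comm_monoid_add) \<Rightarrow> 'k" where
  "coeff_sum C p = (\<Sum>x\<in>Poly_Mapping.keys p. if x \<in> C then Poly_Mapping.lookup p x else 0)"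

lemma coeff_sum_add: "coeff_sum C (p + q) = coeff_sum C p + coeff_sum C q"
  unfolding coeff_sum_def by (rule setsum_keys_plus_distrib) auto

lemma coeff_sum_diff: "coeff_sum C (p - q) = coeff_sum C p - coeff_sum C (q :: _ \<Rightarrow>\<^sub>0 'k::ab_group_add)"
  using coeff_sum_add[of C "p - q" q] by (simp add: algebra_simps)

lemma coeff_sum_zero [simp]: "coeff_sum C 0 = 0"
  by (simp add: coeff_sum_def)

lemma coeff_sum_sum: "coeff_sum C (\<Sum>i\<in>I. f i) = (\<Sum>i\<in>I. coeff_sum C (f i))"
  by (induction I rule: infinite_finite_induct) (auto simp: coeff_sum_add)

lemma coeff_sum_single: "coeff_sum C (Poly_Mapping.single x c) = (if x \<in> C then c else 0)"
  by (simp add: coeff_sum_def)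

definition monom_of_mset :: "'a multiset \<Rightarrow> ('a \<Rightarrow>\<^sub>0 nat)" where
  "monom_of_mset M = Abs_poly_mapping (count M)"

definition mset_of_monom :: "('a \<Rightarrow>\<^sub>0 nat) \<Rightarrow> 'a multiset" where
  "mset_of_monom a = Abs_multiset (Poly_Mapping.lookup a)"

lemma lookup_monom_of_mset [simp]: "Poly_Mapping.lookup (monom_of_mset M) = count M"
  unfolding monom_of_mset_def by (rule Abs_poly_mapping_inverse) simp

lemma count_mset_of_monom [simp]: "count (mset_of_monom a) = Poly_Mapping.lookup a"
  unfolding mset_of_monom_def by (rule count_Abs_multiset) simp

lemma monom_of_mset_plus: "monom_of_mset (A + B) = monom_of_mset A + monom_of_mset B"
  by (rule poly_mapping_eqI) (simp add: lookup_add)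

lemma monom_of_mset_add_mset:
  "monom_of_mset (add_mset x M) = Poly_Mapping.single x 1 + monom_of_mset M"
  by (rule poly_mapping_eqI) (simp add: lookup_add lookup_single when_def)

lemma keys_monom_of_mset [simp]: "Poly_Mapping.keys (monom_of_mset M) = set_mset M"
  by (auto simp: in_keys_iff)

lemma monom_of_mset_of_monom [simp]: "monom_of_mset (mset_of_monom a) = a"
  by (rule poly_mapping_eqI) simp

lemma mset_of_monom_of_mset [simp]: "mset_of_monom (monom_of_mset M) = M"
  by (rule multiset_eqI) simp

lemma mset_of_monom_plus: "mset_of_monom (a + b) = mset_of_monom a + mset_of_monom b"
  by (rule multiset_eqI) (simp add: lookup_add)

lemma set_mset_of_monom [simp]: "set_mset (mset_of_monom a) = Poly_Mapping.keys a"
  by (auto simp: in_keys_iff set_mset_def)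

lemma mon_deg_eq_size: "mon_deg a = size (mset_of_monom a)"
  by (simp add: mon_deg_def size_multiset_overloaded_eq)

lemma mon_deg_monom_of_mset: "mon_deg (monom_of_mset M) = size M"
  by (simp add: mon_deg_eq_size)

lemma edge_mon_image_add: "edge_mon_image (a + b) = edge_mon_image a + edge_mon_image b"
  unfolding edge_mon_image_def
  by (rule setsum_keys_plus_distrib) (auto simp: single_add sum.distrib)

lemma edge_mon_image_single:
  "edge_mon_image (Poly_Mapping.single e c) = (\<Sum>j\<in>e. Poly_Mapping.single j c)"
  by (cases "c = 0") (simp_all add: edge_mon_image_def)

lemma vdeg_empty [simp]: "vdeg {#} v = 0"
  by (simp add: vdeg_def)

lemma vdeg_add_mset: "vdeg (add_mset e M) v = vdeg M v + (if v \<in> e then 1 else 0)"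
  by (simp add: vdeg_def)

lemma vdeg_plus: "vdeg (A + B) v = vdeg A v + vdeg B v"
  by (simp add: vdeg_def)

lemma vdeg_minus: "A \<subseteq># M \<Longrightarrow> vdeg (M - A) v = vdeg M v - vdeg A v"
  by (metis subset_mset.diff_add vdeg_plus diff_add_inverse2)

lemma vdeg_mono: "A \<subseteq># M \<Longrightarrow> vdeg A v \<le> vdeg M v"
  by (metis le_add2 subset_mset.diff_add vdeg_plus)

lemma lookup_edge_mon_image_monom:
  assumes "\<forall>e\<in>#M. finite e"
  shows "Poly_Mapping.lookup (edge_mon_image (monom_of_mset M)) v = vdeg M v"
  using assms
proof (induction M)
  case empty
  then show ?case by (simp add: edge_mon_image_def)
next
  case (add e M)
  have "Poly_Mapping.lookup (\<Sum>j\<in>e. Poly_Mapping.single j (1::nat)) v = (if v \<in> e then 1 else 0)"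
    using add.prems by (simp add: lookup_sum lookup_single when_def)
  with add show ?case
    by (simp add: monom_of_mset_add_mset edge_mon_image_add edge_mon_image_single lookup_add
        vdeg_add_mset)
qed

lemma toric_map_eq_push_keys: "toric_map p = push_keys edge_mon_image p"
  by (simp add: toric_map_def push_keys_def)

lemma toric_map_mult: "toric_map (p * q) = toric_map p * (toric_map q :: 'k::field xpoly)"
  unfolding toric_map_eq_push_keys by (rule push_keys_mult) (rule edge_mon_image_add)

lemma toric_map_add: "toric_map (p + q) = toric_map p + (toric_map q :: 'k::field xpoly)"
  unfolding toric_map_eq_push_keys by (rule push_keys_add)

definition tmonom :: "'a multiset \<Rightarrow> ('a \<Rightarrow>\<^sub>0 nat) \<Rightarrow>\<^sub>0 'k::field" where
  "tmonom M = Poly_Mapping.single (monom_of_mset M) 1"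

lemma tmonom_plus: "tmonom (A + B) = tmonom A * (tmonom B :: _ \<Rightarrow>\<^sub>0 'k::field)"
  by (simp add: tmonom_def mult_single monom_of_mset_plus)

lemma tdeg_binomial_le:
  "tdeg (tmonom A - tmonom B :: 'k::field tpoly) \<le> max (size A) (size B)"
proof -
  have "Poly_Mapping.keys (tmonom A - tmonom B :: 'k tpoly) \<subseteq> {monom_of_mset A, monom_of_mset B}"
    by (auto simp: tmonom_def in_keys_iff lookup_minus lookup_single when_def split: if_splits)
  then show ?thesis
    unfolding tdeg_def by (auto simp: mon_deg_monom_of_mset)
qed

lemma tdeg_ge: "a \<in> Poly_Mapping.keys p \<Longrightarrow> mon_deg a \<le> tdeg p"
  unfolding tdeg_def by (auto intro: Max_ge)

lemma tpoly_ring_zero: "(0 :: 'k::field tpoly) \<in> tpoly_ring E"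
  by (simp add: tpoly_ring_def)

lemma tpoly_ring_add:
  "p \<in> tpoly_ring E \<Longrightarrow> q \<in> tpoly_ring E \<Longrightarrow> (p + q :: 'k::field tpoly) \<in> tpoly_ring E"
  unfolding tpoly_ring_def by (auto dest: subsetD[OF keys_add])

lemma tpoly_ring_diff:
  "p \<in> tpoly_ring E \<Longrightarrow> q \<in> tpoly_ring E \<Longrightarrow> (p - q :: 'k::field tpoly) \<in> tpoly_ring E"
  unfolding tpoly_ring_def by (auto dest: subsetD[OF keys_diff])

lemma tpoly_ring_mult:
  assumes "p \<in> tpoly_ring E" "q \<in> tpoly_ring E"
  shows "(p * q :: 'k::field tpoly) \<in> tpoly_ring E"
  unfolding tpoly_ring_def
proof (intro CollectI ballI)
  fix c assume "c \<in> Poly_Mapping.keys (p * q)"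
  then obtain a b where "c = a + b" "a \<in> Poly_Mapping.keys p" "b \<in> Poly_Mapping.keys q"
    using keys_mult[of p q] by blast
  with assms keys_add[of a b] show "Poly_Mapping.keys c \<subseteq> E"
    unfolding tpoly_ring_def by blast
qed

lemma tpoly_ring_single:
  "Poly_Mapping.keys a \<subseteq> E \<Longrightarrow> (Poly_Mapping.single a c :: 'k::field tpoly) \<in> tpoly_ring E"
  unfolding tpoly_ring_def by auto

lemma tpoly_ring_tmonom: "set_mset M \<subseteq> E \<Longrightarrow> (tmonom M :: 'k::field tpoly) \<in> tpoly_ring E"
  unfolding tmonom_def by (rule tpoly_ring_single) simp

lemma keys_subset_if_tpoly_ring:
  "p \<in> tpoly_ring E \<Longrightarrow> a \<in> Poly_Mapping.keys p \<Longrightarrow> Poly_Mapping.keys a \<subseteq> E"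
  unfolding tpoly_ring_def by auto

lemma ideal_gen_in_add:
  assumes "p \<in> ideal_gen_in R G" "q \<in> ideal_gen_in R G" "0 \<in> R"
    and R_add: "\<And>a b. a \<in> R \<Longrightarrow> b \<in> R \<Longrightarrow> a + b \<in> R"
  shows "p + q \<in> ideal_gen_in R G"
proof -
  obtain F1 c1 where 1: "finite F1" "F1 \<subseteq> G" "\<forall>g\<in>F1. c1 g \<in> R" "p = (\<Sum>g\<in>F1. c1 g * g)"
    using assms(1) unfolding ideal_gen_in_def by blast
  obtain F2 c2 where 2: "finite F2" "F2 \<subseteq> G" "\<forall>g\<in>F2. c2 g \<in> R" "q = (\<Sum>g\<in>F2. c2 g * g)"
    using assms(2) unfolding ideal_gen_in_def by blast
  define c where "c g = (if g \<in> F1 then c1 g else 0) + (if g \<in> F2 then c2 g else 0)" for g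
  have "(\<Sum>g\<in>F1 \<union> F2. c g * g) =
      (\<Sum>g\<in>F1 \<union> F2. if g \<in> F1 then c1 g * g else 0) + (\<Sum>g\<in>F1 \<union> F2. if g \<in> F2 then c2 g * g else 0)"
    unfolding sum.distrib[symmetric] by (rule sum.cong) (auto simp: c_def distrib_right)
  also have "\<dots> = p + q"
    using 1 2 by (simp add: sum.If_cases Int_absorb1 Int_absorb2)
  finally have "p + q = (\<Sum>g\<in>F1 \<union> F2. c g * g)" by simp
  moreover have "c g \<in> R" if "g \<in> F1 \<union> F2" for g
    unfolding c_def using 1(3) 2(3) assms(3) by (intro R_add) auto
  ultimately show ?thesis
    using 1 2 unfolding ideal_gen_in_def by (intro CollectI exI[of _ "F1 \<union> F2"] exI[of _ c]) auto
qed

lemma ideal_gen_in_mult: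
  assumes "p \<in> ideal_gen_in R G" "r \<in> R"
    and "\<And>a b. a \<in> R \<Longrightarrow> b \<in> R \<Longrightarrow> a * b \<in> R"
  shows "r * p \<in> ideal_gen_in R G"
proof -
  obtain F c where 1: "finite F" "F \<subseteq> G" "\<forall>g\<in>F. c g \<in> R" "p = (\<Sum>g\<in>F. c g * g)"
    using assms(1) unfolding ideal_gen_in_def by blast
  have "r * p = (\<Sum>g\<in>F. (r * c g) * g)"
    by (simp add: 1 sum_distrib_left mult.assoc)
  with 1 assms show ?thesis
    unfolding ideal_gen_in_def by (intro CollectI exI[of _ F] exI[of _ "\<lambda>g. r * c g"]) auto
qed

abbreviation low_degree_ideal :: "nat set set \<Rightarrow> nat \<Rightarrow> ('k::field) tpoly set" where
  "low_degree_ideal E d \<equiv> ideal_gen_in (tpoly_ring E) {p \<in> toric_ideal E. tdeg p \<le> d}"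

lemma low_degree_ideal_zero: "0 \<in> low_degree_ideal E d"
  unfolding ideal_gen_in_def by (intro CollectI exI[of _ "{}"]) auto

lemma low_degree_ideal_add:
  "p \<in> low_degree_ideal E d \<Longrightarrow> q \<in> low_degree_ideal E d \<Longrightarrow> p + q \<in> low_degree_ideal E d"
  by (rule ideal_gen_in_add) (auto intro: tpoly_ring_zero tpoly_ring_add)

lemma low_degree_ideal_mult:
  "p \<in> low_degree_ideal E d \<Longrightarrow> r \<in> tpoly_ring E \<Longrightarrow> r * p \<in> low_degree_ideal E d"
  by (rule ideal_gen_in_mult) (auto intro: tpoly_ring_mult)

lemma low_degree_ideal_uminus: "p \<in> low_degree_ideal E d \<Longrightarrow> - p \<in> low_degree_ideal E d"
  using low_degree_ideal_mult[of p E d "Poly_Mapping.single 0 (-1)"] tpoly_ring_single[of 0 E "-1"]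
  by (simp add: single_uminus)

lemma low_degree_ideal_sum:
  "(\<And>i. i \<in> I \<Longrightarrow> f i \<in> low_degree_ideal E d) \<Longrightarrow> (\<Sum>i\<in>I. f i) \<in> low_degree_ideal E d"
  by (induction I rule: infinite_finite_induct) (auto intro: low_degree_ideal_add low_degree_ideal_zero)

lemma toric_ideal_mult:
  "p \<in> toric_ideal E \<Longrightarrow> r \<in> tpoly_ring E \<Longrightarrow> (r * p :: 'k::field tpoly) \<in> toric_ideal E"
  unfolding toric_ideal_def by (auto simp: toric_map_mult intro: tpoly_ring_mult)

lemma toric_ideal_add:
  "p \<in> toric_ideal E \<Longrightarrow> q \<in> toric_ideal E \<Longrightarrow> (p + q :: 'k::field tpoly) \<in> toric_ideal E"
  unfolding toric_ideal_def by (auto simp: toric_map_add intro: tpoly_ring_add)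

lemma low_degree_ideal_subset_toric: "low_degree_ideal E d \<subseteq> (toric_ideal E :: 'k::field tpoly set)"
proof
  fix p :: "'k tpoly" assume "p \<in> low_degree_ideal E d"
  then obtain F c where F: "finite F" "F \<subseteq> toric_ideal E" "\<forall>g\<in>F. c g \<in> tpoly_ring E"
    and p: "p = (\<Sum>g\<in>F. c g * g)"
    unfolding ideal_gen_in_def by blast
  from F have "(\<Sum>g\<in>F. c g * g) \<in> toric_ideal E"
  proof (induction F rule: finite_induct)
    case empty
    then show ?case by (simp add: toric_ideal_def toric_map_def tpoly_ring_zero)
  next
    case (insert g F)
    then show ?case by (simp add: toric_ideal_add toric_ideal_mult)
  qed
  then show "p \<in> toric_ideal E" using p by simp
qed

lemma toric_map_kernel_sum_binomials:
  assumes "toric_map p = (0 :: 'k::field xpoly)"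
  obtains r where
    "\<And>a. a \<in> Poly_Mapping.keys p \<Longrightarrow> r a \<in> Poly_Mapping.keys p \<and> edge_mon_image (r a) = edge_mon_image a"
    "p = (\<Sum>a\<in>Poly_Mapping.keys p.
       Poly_Mapping.single a (Poly_Mapping.lookup p a) - Poly_Mapping.single (r a) (Poly_Mapping.lookup p a))"
proof
  define r where "r a = (SOME b. b \<in> Poly_Mapping.keys p \<and> edge_mon_image b = edge_mon_image a)" for a
  show r: "r a \<in> Poly_Mapping.keys p \<and> edge_mon_image (r a) = edge_mon_image a"
    if "a \<in> Poly_Mapping.keys p" for a
    unfolding r_def by (rule someI[of _ a]) (use that in simp)
  text \<open>Within each fibre of edge_mon_image, r is constant; the fibre sums of p vanish.\<close>
  have "push_keys r p = 0"
  proof (rule poly_mapping_eqI)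
    fix y
    have "(\<Sum>a\<in>{a \<in> Poly_Mapping.keys p. r a = y}. Poly_Mapping.lookup p a) = 0"
    proof (cases "\<exists>a0\<in>Poly_Mapping.keys p. r a0 = y")
      case True
      then obtain a0 where a0: "a0 \<in> Poly_Mapping.keys p" "r a0 = y" by blast
      have "{a \<in> Poly_Mapping.keys p. r a = y} =
          {a \<in> Poly_Mapping.keys p. edge_mon_image a = edge_mon_image a0}"
      proof (intro Collect_cong conj_cong refl iffI)
        fix a assume "a \<in> Poly_Mapping.keys p" "r a = y"
        then show "edge_mon_image a = edge_mon_image a0" using r[of a] r[OF a0(1)] a0(2) by metis
      next
        fix a assume "edge_mon_image a = edge_mon_image a0"
        then show "r a = y" using a0(2) by (simp add: r_def)
      qed
      then show ?thesis
        using assms lookup_push_keys[of edge_mon_image p "edge_mon_image a0"]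
        by (simp add: toric_map_eq_push_keys)
    next
      case False
      then have "{a \<in> Poly_Mapping.keys p. r a = y} = {}" by blast
      then show ?thesis by (metis sum.empty)
    qed
    then show "Poly_Mapping.lookup (push_keys r p) y = Poly_Mapping.lookup 0 y"
      by (simp add: lookup_push_keys)
  qed
  then show "p = (\<Sum>a\<in>Poly_Mapping.keys p.
       Poly_Mapping.single a (Poly_Mapping.lookup p a) - Poly_Mapping.single (r a) (Poly_Mapping.lookup p a))"
    by (subst (1) poly_mapping_sum_single) (simp add: push_keys_def sum_subtractf)
qed

definition low_equiv ::
  "'k::field itself \<Rightarrow> nat set set \<Rightarrow> nat \<Rightarrow> nat set multiset \<Rightarrow> nat set multiset \<Rightarrow> bool" where
  "low_equiv K E d A B \<longleftrightarrow> (tmonom A - tmonom B :: 'k tpoly) \<in> low_degree_ideal E d"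

lemma low_equiv_refl: "low_equiv K E d A A"
  by (simp add: low_equiv_def low_degree_ideal_zero)

lemma low_equiv_sym: "low_equiv K E d A B \<Longrightarrow> low_equiv K E d B A"
  unfolding low_equiv_def by (drule low_degree_ideal_uminus) simp

lemma low_equiv_trans: "low_equiv K E d A B \<Longrightarrow> low_equiv K E d B C \<Longrightarrow> low_equiv K E d A C"
  unfolding low_equiv_def by (drule (1) low_degree_ideal_add) simp

lemma low_equiv_add_left:
  assumes "low_equiv (K :: 'k::field itself) E d A B" "set_mset C \<subseteq> E"
  shows "low_equiv K E d (C + A) (C + B)"
proof -
  have "(tmonom (C + A) - tmonom (C + B) :: 'k tpoly) = tmonom C * (tmonom A - tmonom B)"
    by (simp add: tmonom_plus right_diff_distrib)
  with assms show ?thesis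
    unfolding low_equiv_def by (simp add: low_degree_ideal_mult tpoly_ring_tmonom)
qed

lemma balanced_iff:
  "balanced E W \<longleftrightarrow>
     set_mset (blue W) \<subseteq> E \<and> set_mset (red W) \<subseteq> E \<and> (\<forall>v. vdeg (blue W) v = vdeg (red W) v)"
  unfolding balanced_def bsupp_def by auto

lemma balanced_pair_iff:
  "balanced E (X, Y) \<longleftrightarrow> set_mset X \<subseteq> E \<and> set_mset Y \<subseteq> E \<and> (\<forall>v. vdeg X v = vdeg Y v)"
  by (simp add: balanced_iff)

lemma balanced_swap: "balanced E (prod.swap X) \<longleftrightarrow> balanced E X"
  by (auto simp: balanced_iff)

locale uniform_hypergraph =
  fixes m k :: nat and E :: "nat set set"
  assumes hypergraph: "hypergraph m E" and uniform: "uniform k E"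
begin

lemma edge_finite: "e \<in> E \<Longrightarrow> finite e"
  using hypergraph unfolding hypergraph_def by (meson finite_atLeastAtMost finite_subset)

lemma edge_nonempty: "e \<in> E \<Longrightarrow> e \<noteq> {}"
  using hypergraph unfolding hypergraph_def by blast

lemma edge_card: "e \<in> E \<Longrightarrow> card e = k"
  using uniform unfolding uniform_def by blast

lemma sum_vdeg: "set_mset M \<subseteq> E \<Longrightarrow> (\<Sum>v\<in>{1..m}. vdeg M v) = k * size M"
proof (induction M)
  case (add e M)
  then have e: "e \<in> E" by simp
  have "(\<Sum>v\<in>{1..m}. if v \<in> e then 1 else 0::nat) = card ({1..m} \<inter> e)"
    by (simp add: sum.If_cases)
  also have "\<dots> = k"
    using hypergraph e edge_card[OF e] unfolding hypergraph_def by (simp add: Int_absorb1)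
  finally show ?case using add by (simp add: vdeg_add_mset sum.distrib)
qed simp

lemma empty_if_vdeg_zero:
  assumes "set_mset M \<subseteq> E" "\<And>v. vdeg M v = 0"
  shows "M = {#}"
proof (rule ccontr)
  assume "M \<noteq> {#}"
  then obtain e where e: "e \<in># M" by blast
  with assms(1) obtain v where "v \<in> e" using edge_nonempty by blast
  with e have "e \<in># filter_mset (\<lambda>e. v \<in> e) M" by simp
  then have "vdeg M v > 0"
    unfolding vdeg_def by (metis empty_iff neq0_conv set_mset_empty size_eq_0_iff_empty)
  then show False using assms(2) by simp
qed

lemma empty_iff_if_balanced:
  "balanced E (X, Y) \<Longrightarrow> X = {#} \<longleftrightarrow> Y = {#}"
  unfolding balanced_pair_iff by (metis vdeg_empty empty_if_vdeg_zero)

lemma size_eq_if_balanced: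
  assumes "balanced E (X, Y)"
  shows "size X = size Y"
proof (cases "X = {#}")
  case True
  then show ?thesis using empty_iff_if_balanced[OF assms] by simp
next
  case False
  then obtain e where e: "e \<in># X" by blast
  with assms have "k > 0"
    using edge_card edge_finite edge_nonempty by (fastforce simp: balanced_pair_iff card_gt_0_iff)
  moreover have "k * size X = k * size Y"
    using assms sum_vdeg[of X] sum_vdeg[of Y] by (simp add: balanced_pair_iff)
  ultimately show ?thesis by simp
qed

lemma edge_mon_image_monom_eq_iff:
  assumes "set_mset A \<subseteq> E" "set_mset B \<subseteq> E"
  shows "edge_mon_image (monom_of_mset A) = edge_mon_image (monom_of_mset B) \<longleftrightarrow>
    (\<forall>v. vdeg A v = vdeg B v)"
  using assms edge_finite
  by (auto simp: poly_mapping_eq_iff fun_eq_iff lookup_edge_mon_image_monom subset_iff)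

lemma binomial_in_toric_ideal:
  assumes "balanced E (A, B)"
  shows "(tmonom A - tmonom B :: 'k::field tpoly) \<in> toric_ideal E"
proof -
  have "toric_map (tmonom A - tmonom B :: 'k tpoly) = 0"
    using assms edge_mon_image_monom_eq_iff[of A B]
    by (simp add: balanced_pair_iff toric_map_eq_push_keys push_keys_diff tmonom_def)
  with assms show ?thesis
    by (simp add: toric_ideal_def balanced_pair_iff tpoly_ring_diff tpoly_ring_tmonom)
qed

lemma low_equiv_if_small:
  assumes "balanced E (A, B)" "size A \<le> d"
  shows "low_equiv (K :: 'k::field itself) E d A B"
proof -
  have "tdeg (tmonom A - tmonom B :: 'k tpoly) \<le> d"
    using tdeg_binomial_le[of A B, where 'k = 'k] assms size_eq_if_balanced[OF assms(1)] by simp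
  then show ?thesis
    using binomial_in_toric_ideal[OF assms(1)] unfolding low_equiv_def ideal_gen_in_def
    by (intro CollectI exI[of _ "{tmonom A - tmonom B}"] exI[of _ "\<lambda>_. 1"])
      (auto simp: tpoly_ring_def)
qed

lemma toric_ideal_subset_low_degree_ideal:
  assumes "\<And>A B. balanced E (A, B) \<Longrightarrow> low_equiv TYPE('k::field) E d A B"
  shows "toric_ideal E \<subseteq> (low_degree_ideal E d :: 'k tpoly set)"
proof
  fix p :: "'k tpoly" assume "p \<in> toric_ideal E"
  then have p: "p \<in> tpoly_ring E" "toric_map p = 0" unfolding toric_ideal_def by auto
  obtain r where r: "\<And>a. a \<in> Poly_Mapping.keys p \<Longrightarrow>
        r a \<in> Poly_Mapping.keys p \<and> edge_mon_image (r a) = edge_mon_image a"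
    and p_eq: "p = (\<Sum>a\<in>Poly_Mapping.keys p.
       Poly_Mapping.single a (Poly_Mapping.lookup p a) - Poly_Mapping.single (r a) (Poly_Mapping.lookup p a))"
    using toric_map_kernel_sum_binomials[OF p(2)] by blast
  have "Poly_Mapping.single a (Poly_Mapping.lookup p a) - Poly_Mapping.single (r a) (Poly_Mapping.lookup p a)
      \<in> low_degree_ideal E d" if a: "a \<in> Poly_Mapping.keys p" for a
  proof -
    have "balanced E (mset_of_monom a, mset_of_monom (r a))"
      using edge_mon_image_monom_eq_iff[of "mset_of_monom a" "mset_of_monom (r a)"] r[OF a]
        keys_subset_if_tpoly_ring[OF p(1)] a
      by (auto simp: balanced_pair_iff)
    with assms have "(tmonom (mset_of_monom a) - tmonom (mset_of_monom (r a)) :: 'k tpoly)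
        \<in> low_degree_ideal E d"
      unfolding low_equiv_def by blast
    from low_degree_ideal_mult[OF this tpoly_ring_single[of 0 E "Poly_Mapping.lookup p a"]]
    show ?thesis by (simp add: tmonom_def right_diff_distrib mult_single)
  qed
  then show "p \<in> low_degree_ideal E d"
    by (subst p_eq) (rule low_degree_ideal_sum)
qed

end

section \<open>Splitting sets yield low-degree relations\<close>

definition long_primitive_walks_split :: "nat set set \<Rightarrow> nat \<Rightarrow> bool" where
  "long_primitive_walks_split E d \<longleftrightarrow>
    (\<forall>W n. primitive E W \<and> bsupp W \<subseteq> E \<and> bsize W = 2 * n \<and> n > d \<longrightarrow>
       (\<exists>S. proper_splitting_set E W S) \<or> splitting_chain E W n)"

lemma reducible_withD:
  assumes "reducible_with E (add_both W S) \<Gamma>1 S \<Gamma>2"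
  shows "balanced E \<Gamma>1" "balanced E \<Gamma>2" "S \<noteq> {#}" "S = red \<Gamma>1 \<inter># blue \<Gamma>2"
    "blue W + S + (red W + S) = blue \<Gamma>1 + red \<Gamma>1 + blue \<Gamma>2 + red \<Gamma>2"
    "blue \<Gamma>1 \<subseteq># blue W + S" "blue \<Gamma>2 \<subseteq># blue W + S"
    "red \<Gamma>1 \<subseteq># red W + S" "red \<Gamma>2 \<subseteq># red W + S"
  using assms unfolding reducible_with_def add_both_def by auto

lemma reducible_with_swap:
  assumes "reducible_with E (add_both W S) \<Gamma>1 S \<Gamma>2"
  shows "reducible_with E (add_both (prod.swap W) S) (prod.swap \<Gamma>2) S (prod.swap \<Gamma>1)"
proof -
  obtain B R b1 r1 b2 r2 where W: "W = (B, R)" and "\<Gamma>1 = (b1, r1)" "\<Gamma>2 = (b2, r2)"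
    by (metis prod.exhaust)
  with assms show ?thesis
    unfolding reducible_with_def add_both_def bsupp_def
    by (clarsimp simp: balanced_pair_iff ac_simps subset_mset.inf_commute)
qed

lemma red_splitting_set_swap:
  "red_splitting_set_with E W \<Upsilon>1 R \<Upsilon>2 \<Longrightarrow>
     blue_splitting_set_with E (prod.swap W) (prod.swap \<Upsilon>2) R (prod.swap \<Upsilon>1)"
  unfolding red_splitting_set_with_def blue_splitting_set_with_def splitting_set_with_def
    red_sep_def blue_sep_def proper_sep_def
  by (auto dest: reducible_with_swap)

context uniform_hypergraph
begin

definition low_equiv_below :: "'k::field itself \<Rightarrow> nat \<Rightarrow> nat \<Rightarrow> bool" where
  "low_equiv_below K d n \<longleftrightarrow> (\<forall>X Y. balanced E (X, Y) \<longrightarrow> size X < n \<longrightarrow> low_equiv K E d X Y)"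

lemma low_equiv_belowD:
  "low_equiv_below K d n \<Longrightarrow> balanced E (X, Y) \<Longrightarrow> size X < n \<Longrightarrow> low_equiv K E d X Y"
  unfolding low_equiv_below_def by blast

lemma low_equiv_if_common_edge:
  assumes below: "low_equiv_below K d n" and bal: "balanced E (X, Y)" and "size X \<le> n"
    and x: "x \<in># X" "x \<in># Y"
  shows "low_equiv K E d X Y"
proof -
  have "balanced E (X - {#x#}, Y - {#x#})"
    using bal x by (auto simp: balanced_pair_iff vdeg_minus dest: in_diffD)
  moreover have "size (X - {#x#}) < n"
    using size_Diff1_less[OF x(1)] \<open>size X \<le> n\<close> by simp
  ultimately have "low_equiv K E d (X - {#x#}) (Y - {#x#})"
    by (rule low_equiv_belowD[OF below])
  then have "low_equiv K E d ({#x#} + (X - {#x#})) ({#x#} + (Y - {#x#}))"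
    by (rule low_equiv_add_left) (use bal x in \<open>auto simp: balanced_pair_iff\<close>)
  with x show ?thesis by simp
qed

lemma reducible_with_sizes:
  assumes "balanced E W" "reducible_with E (add_both W S) \<Gamma>1 S \<Gamma>2"
  shows "size (blue \<Gamma>1) = size (red \<Gamma>1)" "size (blue \<Gamma>2) = size (red \<Gamma>2)"
    "size (blue \<Gamma>1) + size (blue \<Gamma>2) = size (blue W) + size S"
proof -
  note D = reducible_withD[OF assms(2)]
  show 1: "size (blue \<Gamma>1) = size (red \<Gamma>1)" and 2: "size (blue \<Gamma>2) = size (red \<Gamma>2)"
    using size_eq_if_balanced[of "blue _" "red _"] D(1,2) by simp_all
  have "size (blue W) = size (red W)"
    using size_eq_if_balanced[of "blue W" "red W"] assms(1) by simp
  moreover have "size (blue W + S + (red W + S)) = size (blue \<Gamma>1 + red \<Gamma>1 + blue \<Gamma>2 + red \<Gamma>2)"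
    using D(5) by simp
  ultimately show "size (blue \<Gamma>1) + size (blue \<Gamma>2) = size (blue W) + size S"
    using 1 2 by simp
qed

lemma low_equiv_reduct:
  assumes below: "low_equiv_below K d n" and bal: "balanced E (B, R)" and "size B \<le> n"
    and red: "reducible_with E (add_both (B, R) S) (b1, r1) S (b2, r2)" and "S \<noteq> b2"
  shows "balanced E (b1 + (b2 - S), B)" "low_equiv K E d B (b1 + (b2 - S))"
proof -
  note D = reducible_withD[OF red, simplified]
  have S_b2: "S \<subseteq># b2" using D(4) by simp
  show bal': "balanced E (b1 + (b2 - S), B)"
    unfolding balanced_pair_iff
  proof (intro conjI allI)
    show "set_mset (b1 + (b2 - S)) \<subseteq> E" "set_mset B \<subseteq> E"
      using D(1,2) bal by (auto simp: balanced_pair_iff dest: in_diffD)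
    fix v
    have "vdeg (B + S + (R + S)) v = vdeg (b1 + r1 + b2 + r2) v" using D(5) by simp
    then show "vdeg (b1 + (b2 - S)) v = vdeg B v"
      using D(1,2) bal vdeg_mono[OF S_b2, of v]
      by (simp add: balanced_pair_iff vdeg_plus vdeg_minus[OF S_b2])
  qed
  text \<open>If B shared no edge with b1 + (b2 - S), then b2 \<subseteq># B + S would force b2 = S.\<close>
  have "\<exists>x. x \<in># B \<and> x \<in># b1 + (b2 - S)"
  proof (rule ccontr)
    assume disjoint: "\<not> ?thesis"
    have "count b2 x = count S x" for x
    proof (cases "x \<in># B")
      case True
      with disjoint have "x \<notin># b2 - S" by auto
      then have "count b2 x \<le> count S x" by (simp add: not_in_iff)
      with S_b2 show ?thesis by (meson le_antisym mset_subset_eq_count)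
    next
      case False
      have "count b2 x \<le> count (B + S) x" using D(7) by (rule mset_subset_eq_count)
      with False S_b2 show ?thesis by (simp add: not_in_iff) (meson le_antisym mset_subset_eq_count)
    qed
    with \<open>S \<noteq> b2\<close> show False by (simp add: multiset_eqI)
  qed
  then obtain x where x: "x \<in># B" "x \<in># b1 + (b2 - S)" by blast
  have "balanced E (B, b1 + (b2 - S))"
    using bal' balanced_swap[of E "(b1 + (b2 - S), B)"] by simp
  from low_equiv_if_common_edge[OF below this \<open>size B \<le> n\<close> x]
  show "low_equiv K E d B (b1 + (b2 - S))" .
qed

lemma low_equiv_if_proper_separator:
  assumes below: "low_equiv_below K d n" and bal: "balanced E (B, R)" and "size B = n"
    and red: "reducible_with E (add_both (B, R) S) \<Gamma>1 S \<Gamma>2" and "proper_sep \<Gamma>1 S \<Gamma>2"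
  shows "low_equiv K E d B R"
proof -
  obtain b1 r1 b2 r2 where \<Gamma>: "\<Gamma>1 = (b1, r1)" "\<Gamma>2 = (b2, r2)" by (metis prod.exhaust)
  note red = red[unfolded \<Gamma>]
  note D = reducible_withD[OF red, simplified]
  have S_r1: "S \<subset># r1" and S_b2: "S \<subset># b2"
    using \<open>proper_sep \<Gamma>1 S \<Gamma>2\<close> by (auto simp: proper_sep_def \<Gamma>)
  text \<open>B \<sim> b1 + (b2 - S) \<sim> r1 + (b2 - S) = b2 + (r1 - S) \<sim> r2 + (r1 - S) \<sim> R, where the
    middle steps use the walks (b1, r1) and (b2, r2), which are shorter than n as S is proper.\<close>
  have size_R: "size R = n" using size_eq_if_balanced[OF bal] \<open>size B = n\<close> by simp
  have "size b1 < n" "size b2 < n"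
    using reducible_with_sizes[OF bal red] mset_subset_size[OF S_r1] mset_subset_size[OF S_b2]
      \<open>size B = n\<close> by simp_all
  then have b1_r1: "low_equiv K E d b1 r1" and b2_r2: "low_equiv K E d b2 r2"
    using D(1,2) by (auto intro: low_equiv_belowD[OF below])
  have "low_equiv K E d B (b1 + (b2 - S))"
    using low_equiv_reduct(2)[OF below bal _ red] S_b2 \<open>size B = n\<close> by auto
  moreover have "low_equiv K E d R (r2 + (r1 - S))"
    using low_equiv_reduct(2)[OF below _ _ reducible_with_swap[OF red, simplified]]
      bal S_r1 size_R by (auto simp: balanced_pair_iff)
  moreover have "low_equiv K E d ((b2 - S) + b1) ((b2 - S) + r1)"
    using b1_r1 D(2) by (auto intro: low_equiv_add_left simp: balanced_pair_iff dest: in_diffD)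
  moreover have "low_equiv K E d ((r1 - S) + b2) ((r1 - S) + r2)"
    using b2_r2 D(1) by (auto intro: low_equiv_add_left simp: balanced_pair_iff dest: in_diffD)
  moreover have "(b2 - S) + r1 = (r1 - S) + b2"
    using S_r1 S_b2 by (metis subset_mset.less_imp_le subset_mset.diff_add add.commute
        subset_mset.add_diff_assoc2)
  ultimately show ?thesis
    by (metis add.commute low_equiv_sym low_equiv_trans)
qed

lemma low_equiv_blue_splitting:
  assumes below: "low_equiv_below K d n" and bal: "balanced E (B, R)" and "size B = n"
    and split: "blue_splitting_set_with E (B, R) \<Gamma>1 S \<Gamma>2" and "size S < n"
  shows "balanced E (blue \<Gamma>2, R)" "size (blue \<Gamma>2) = n" "low_equiv K E d B (blue \<Gamma>2)"
proof -
  obtain b1 r1 b2 r2 where \<Gamma>: "\<Gamma>1 = (b1, r1)" "\<Gamma>2 = (b2, r2)" by (metis prod.exhaust)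
  have red: "reducible_with E (add_both (B, R) S) (b1, r1) S (b2, r2)" and "r1 = S"
    using split unfolding blue_splitting_set_with_def splitting_set_with_def blue_sep_def \<Gamma> by auto
  note D = reducible_withD[OF red, simplified]
  have S_b2: "S \<subseteq># b2" using D(4) by simp
  show "size (blue \<Gamma>2) = n"
    using reducible_with_sizes[OF bal red] \<open>r1 = S\<close> \<open>size B = n\<close> \<Gamma> by simp
  then have "S \<noteq> b2" using \<open>size S < n\<close> \<Gamma> by auto
  from low_equiv_reduct[OF below bal _ red this] \<open>size B = n\<close>
  have reduct: "balanced E (b1 + (b2 - S), B)" "low_equiv K E d B (b1 + (b2 - S))" by simp_all
  text \<open>Since \<Gamma>1 = (b1, S) is balanced and small, b1 may be exchanged for S inside the reduct.\<close>
  have "low_equiv K E d b1 S"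
    using D(1) \<open>r1 = S\<close> reducible_with_sizes(1)[OF bal red] \<open>size S < n\<close>
    by (intro low_equiv_belowD[OF below]) simp_all
  then have "low_equiv K E d ((b2 - S) + b1) ((b2 - S) + S)"
    using D(2) by (auto intro: low_equiv_add_left simp: balanced_pair_iff dest: in_diffD)
  with reduct(2) S_b2 show "low_equiv K E d B (blue \<Gamma>2)"
    by (simp add: \<Gamma> add.commute) (metis low_equiv_trans add.commute)
  have "vdeg b2 v = vdeg R v" for v
  proof -
    have "vdeg (b1 + (b2 - S)) v = vdeg R v" "vdeg b1 v = vdeg S v"
      using reduct(1) bal D(1) \<open>r1 = S\<close> by (simp_all add: balanced_pair_iff)
    then show ?thesis using vdeg_mono[OF S_b2, of v] by (simp add: vdeg_plus vdeg_minus[OF S_b2])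
  qed
  then show "balanced E (blue \<Gamma>2, R)"
    using D(2) bal by (simp add: \<Gamma> balanced_pair_iff)
qed

lemma low_equiv_red_splitting:
  assumes below: "low_equiv_below K d n" and bal: "balanced E (B, R)" and "size B = n"
    and split: "red_splitting_set_with E (B, R) \<Upsilon>1 S \<Upsilon>2" and "size S < n"
  shows "balanced E (B, red \<Upsilon>1)" "low_equiv K E d R (red \<Upsilon>1)"
proof -
  have "balanced E (R, B)" "size R = n"
    using bal size_eq_if_balanced[OF bal] \<open>size B = n\<close> by (auto simp: balanced_pair_iff)
  note blue = low_equiv_blue_splitting[OF below this red_splitting_set_swap[OF split, simplified]
      \<open>size S < n\<close>]
  show "balanced E (B, red \<Upsilon>1)"
    using blue(1) balanced_swap[of E "(red \<Upsilon>1, B)"] by simp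
  show "low_equiv K E d R (red \<Upsilon>1)"
    using blue(3) by simp
qed

lemma low_equiv_chain_step:
  assumes below: "low_equiv_below K d n" and bal: "balanced E X" and "size (blue X) = n"
    and "blue_splitting_set_with E X \<Gamma>1 S \<Gamma>2" "red_splitting_set_with E X \<Upsilon>1 R \<Upsilon>2"
    and "size S < n" "size R < n"
  shows "balanced E (blue \<Gamma>2, red \<Upsilon>1)" "size (blue \<Gamma>2) = n"
    "low_equiv K E d (blue X) (blue \<Gamma>2)" "low_equiv K E d (red X) (red \<Upsilon>1)"
proof -
  have bal': "balanced E (blue X, red X)" using bal by simp
  note blue = low_equiv_blue_splitting[OF below bal' \<open>size (blue X) = n\<close>, simplified,
      OF assms(4,6)]
  note red = low_equiv_red_splitting[OF below bal' \<open>size (blue X) = n\<close>, simplified, OF assms(5,7)]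
  show "balanced E (blue \<Gamma>2, red \<Upsilon>1)"
    using blue(1) red(1) bal by (simp add: balanced_iff)
  show "size (blue \<Gamma>2) = n" "low_equiv K E d (blue X) (blue \<Gamma>2)" "low_equiv K E d (red X) (red \<Upsilon>1)"
    using blue red by simp_all
qed

lemma splitting_set_with_subset:
  "splitting_set_with E W \<Gamma>1 S \<Gamma>2 \<Longrightarrow> S \<subseteq># red \<Gamma>1 \<and> S \<subseteq># blue \<Gamma>2"
  unfolding splitting_set_with_def reducible_with_def by auto

lemma low_equiv_chain_end:
  assumes below: "low_equiv_below K d n" and bal: "balanced E X" and "size (blue X) = n"
    and "S \<subseteq># blue X" "R \<subseteq># red X" and "S \<inter># R \<noteq> {#} \<or> (\<exists>T. proper_splitting_set E X T)"
  shows "low_equiv K E d (blue X) (red X)"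
  using assms(6)
proof
  assume "S \<inter># R \<noteq> {#}"
  then obtain x where "x \<in># S" "x \<in># R"
    by (metis ex_in_conv set_mset_eq_empty_iff Multiset.set_mset_inter IntE)
  with assms(3-5) bal show ?thesis
    by (intro low_equiv_if_common_edge[OF below, of _ _ x]) (auto dest: mset_subset_eqD)
next
  assume "\<exists>T. proper_splitting_set E X T"
  with bal \<open>size (blue X) = n\<close> show ?thesis
    unfolding proper_splitting_set_def splitting_set_with_def
    by (auto intro: low_equiv_if_proper_separator[OF below, of "blue X" "red X"])
qed

lemma low_equiv_if_splitting_chain:
  assumes below: "low_equiv_below K d n" and "balanced E W" and "size (blue W) = n"
    and "splitting_chain E W n"
  shows "low_equiv K E d (blue W) (red W)"
proof -
  obtain N S R \<Gamma>1 \<Gamma>2 \<Upsilon>1 \<Upsilon>2 where "N \<ge> 1"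
    and steps: "\<And>i. i \<in> {1..N} \<Longrightarrow>
          blue_splitting_set_with E (chain_walk W \<Gamma>2 \<Upsilon>1 (i - 1)) (\<Gamma>1 i) (S i) (\<Gamma>2 i) \<and>
          red_splitting_set_with E (chain_walk W \<Gamma>2 \<Upsilon>1 (i - 1)) (\<Upsilon>1 i) (R i) (\<Upsilon>2 i) \<and>
          size (S i) < n \<and> size (R i) < n"
    and final: "S N \<inter># R N \<noteq> {#} \<or> (\<exists>T. proper_splitting_set E (chain_walk W \<Gamma>2 \<Upsilon>1 N) T)"
    using \<open>splitting_chain E W n\<close> unfolding splitting_chain_def by blast
  define X where "X i = chain_walk W \<Gamma>2 \<Upsilon>1 i" for i
  have X_Suc: "X (Suc i) = (blue (\<Gamma>2 (Suc i)), red (\<Upsilon>1 (Suc i)))" for i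
    by (simp add: X_def chain_walk_def)
  have step: "blue_splitting_set_with E (X i) (\<Gamma>1 (Suc i)) (S (Suc i)) (\<Gamma>2 (Suc i))"
    "red_splitting_set_with E (X i) (\<Upsilon>1 (Suc i)) (R (Suc i)) (\<Upsilon>2 (Suc i))"
    "size (S (Suc i)) < n" "size (R (Suc i)) < n" if "i < N" for i
    using steps[of "Suc i"] that unfolding X_def by auto
  have inv: "balanced E (X i) \<and> size (blue (X i)) = n \<and>
      low_equiv K E d (blue W) (blue (X i)) \<and> low_equiv K E d (red W) (red (X i))" if "i \<le> N" for i
    using that
  proof (induction i)
    case 0
    then show ?case using assms by (simp add: X_def chain_walk_def low_equiv_refl)
  next
    case (Suc i)
    with low_equiv_chain_step[OF below _ _ step[of i]] show ?case
      by (auto simp: X_Suc intro: low_equiv_trans)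
  qed
  obtain N' where "N = Suc N'" using \<open>N \<ge> 1\<close> by (cases N) auto
  have "S N \<subseteq># blue (X N)" "R N \<subseteq># red (X N)"
    using step(1,2)[of N'] \<open>N = Suc N'\<close>
    unfolding blue_splitting_set_with_def red_splitting_set_with_def
    by (auto simp: X_Suc dest: splitting_set_with_subset)
  with inv[of N] final have "low_equiv K E d (blue (X N)) (red (X N))"
    by (intro low_equiv_chain_end[OF below]) (auto simp: X_def)
  with inv[of N] show ?thesis by (meson low_equiv_sym low_equiv_trans order_refl)
qed

lemma low_equiv_if_not_primitive:
  assumes below: "low_equiv_below K d (size X)" and bal: "balanced E (X, Y)"
    and "\<not> primitive E (X, Y)"
  shows "low_equiv K E d X Y"
proof -
  obtain X' Y' where bal': "balanced E (X', Y')" and "(X', Y') \<noteq> ({#}, {#})"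
    and "X' \<subset># X" "Y' \<subset># Y"
    using bal \<open>\<not> primitive E (X, Y)\<close> unfolding primitive_def by fastforce
  then have "X' \<noteq> {#}" and X': "X' \<subseteq># X" and Y': "Y' \<subseteq># Y"
    using empty_iff_if_balanced[OF bal'] by auto
  have "size X' < size X" using mset_subset_size[OF \<open>X' \<subset># X\<close>] .
  moreover have "size (X - X') < size X"
    using size_Diff_submset[OF X'] \<open>X' \<noteq> {#}\<close> \<open>size X' < size X\<close> by (simp add: nonempty_has_size)
  moreover have bal_rest: "balanced E (X - X', Y - Y')"
    using bal bal' X' Y' by (auto simp: balanced_pair_iff vdeg_minus dest: in_diffD)
  ultimately have "low_equiv K E d X' Y'" "low_equiv K E d (X - X') (Y - Y')"
    using bal' by (auto intro: low_equiv_belowD[OF below])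
  then have "low_equiv K E d ((X - X') + X') ((X - X') + Y')"
    and "low_equiv K E d (Y' + (X - X')) (Y' + (Y - Y'))"
    using bal' bal_rest by (auto intro!: low_equiv_add_left simp: balanced_pair_iff)
  with X' Y' show ?thesis
    by (metis add.commute low_equiv_trans subset_mset.diff_add)
qed

lemma low_equiv_if_walks_split:
  assumes split: "long_primitive_walks_split E d" and "balanced E (X, Y)"
  shows "low_equiv K E d X Y"
  using assms(2)
proof (induction "size X" arbitrary: X Y rule: less_induct)
  case less
  have below: "low_equiv_below K d (size X)"
    using less.hyps unfolding low_equiv_below_def by blast
  have size_Y: "size Y = size X" using size_eq_if_balanced[OF less.prems] by simp
  consider "size X \<le> d" | "d < size X" "primitive E (X, Y)" | "\<not> primitive E (X, Y)"
    by linarith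
  then show ?case
  proof cases
    case 1
    with less.prems show ?thesis by (rule low_equiv_if_small)
  next
    case 2
    with less.prems size_Y
    have "primitive E (X, Y) \<and> bsupp (X, Y) \<subseteq> E \<and> bsize (X, Y) = 2 * size X \<and> size X > d"
      by (simp add: bsize_def bsupp_def balanced_pair_iff)
    with split have "(\<exists>S. proper_splitting_set E (X, Y) S) \<or> splitting_chain E (X, Y) (size X)"
      unfolding long_primitive_walks_split_def by blast
    then show ?thesis
    proof
      assume "\<exists>S. proper_splitting_set E (X, Y) S"
      then obtain S \<Gamma>1 \<Gamma>2 where
        "reducible_with E (add_both (X, Y) S) \<Gamma>1 S \<Gamma>2" "proper_sep \<Gamma>1 S \<Gamma>2"
        unfolding proper_splitting_set_def splitting_set_with_def by blast
      then show ?thesis by (rule low_equiv_if_proper_separator[OF below less.prems refl])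
    next
      assume "splitting_chain E (X, Y) (size X)"
      with low_equiv_if_splitting_chain[OF below less.prems] show ?thesis by simp
    qed
  next
    case 3
    with below less.prems show ?thesis by (rule low_equiv_if_not_primitive)
  qed
qed

lemma generated_if_walks_split:
  assumes "long_primitive_walks_split E d"
  shows "generated_in_degree_at_most E d TYPE('k::field)"
  unfolding generated_in_degree_at_most_def
proof (rule subset_antisym)
  show "toric_ideal E \<subseteq> (low_degree_ideal E d :: 'k tpoly set)"
    by (rule toric_ideal_subset_low_degree_ideal) (rule low_equiv_if_walks_split[OF assms])
qed (rule low_degree_ideal_subset_toric)

end

section \<open>Low-degree generation yields splitting chains\<close>

definition move_via ::
  "nat set set \<Rightarrow> nat \<Rightarrow> nat set multiset \<Rightarrow> nat set multiset \<Rightarrow> nat set multiset \<Rightarrow>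
     nat set multiset \<Rightarrow> nat set multiset \<Rightarrow> bool" where
  "move_via E d A A' w u v \<longleftrightarrow>
     A = w + u \<and> A' = w + v \<and> set_mset w \<subseteq> E \<and> balanced E (u, v) \<and> size u \<le> d"

definition low_move :: "nat set set \<Rightarrow> nat \<Rightarrow> nat set multiset \<Rightarrow> nat set multiset \<Rightarrow> bool" where
  "low_move E d A A' \<longleftrightarrow> (\<exists>w u v. move_via E d A A' w u v)"

lemma low_move_refl: "set_mset A \<subseteq> E \<Longrightarrow> low_move E d A A"
  unfolding low_move_def move_via_def
  by (intro exI[of _ A] exI[of _ "{#}"]) (simp add: balanced_pair_iff)

lemma balanced_if_move_via: "move_via E d A A' w u v \<Longrightarrow> balanced E (A, A')"
  unfolding move_via_def by (auto simp: balanced_pair_iff vdeg_plus)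

lemma balanced_if_low_move: "low_move E d A A' \<Longrightarrow> balanced E (A, A')"
  unfolding low_move_def by (auto dest: balanced_if_move_via)

lemma balanced_trans: "balanced E (A, B) \<Longrightarrow> balanced E (B, C) \<Longrightarrow> balanced E (A, C)"
  by (simp add: balanced_pair_iff)

lemma balanced_if_low_moves:
  assumes "(low_move E d)\<^sup>*\<^sup>* A A'" "set_mset A \<subseteq> E"
  shows "balanced E (A, A')"
  using assms
proof (induction rule: rtranclp_induct)
  case base
  then show ?case by (simp add: balanced_pair_iff)
next
  case (step y z)
  then show ?case by (blast intro: balanced_trans balanced_if_low_move)
qed

lemma move_blue_splitting_set:
  assumes bal: "balanced E (P, Q)" and move: "move_via E d P P' w u v"
    and "v \<noteq> {#}" "size u < size P"
  shows "blue_splitting_set_with E (P, Q) (u, v) v (P', Q)"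
proof -
  have "reducible_with E (add_both (P, Q) v) (u, v) v (P', Q)"
    using move bal \<open>v \<noteq> {#}\<close> \<open>size u < size P\<close>
    unfolding reducible_with_def add_both_def move_via_def
    by (auto simp: balanced_pair_iff bsupp_def vdeg_plus ac_simps subset_mset.inf_absorb1)
  with \<open>v \<noteq> {#}\<close> show ?thesis
    unfolding blue_splitting_set_with_def splitting_set_with_def blue_sep_def proper_sep_def
    by (auto simp: reducible_with_def balanced_pair_iff)
qed

lemma move_red_splitting_set:
  assumes bal: "balanced E (P, Q)" and move: "move_via E d Q' Q w u v"
    and "u \<noteq> {#}" "P \<noteq> {#}"
  shows "red_splitting_set_with E (P, Q) (P, Q') u (u, v)"
proof -
  have "reducible_with E (add_both (P, Q) u) (P, Q') u (u, v)"
    using move bal \<open>u \<noteq> {#}\<close> \<open>P \<noteq> {#}\<close>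
    unfolding reducible_with_def add_both_def move_via_def
    by (auto simp: balanced_pair_iff bsupp_def vdeg_plus ac_simps
        subset_mset.inf_absorb1 subset_mset.inf_absorb2)
  with \<open>u \<noteq> {#}\<close> show ?thesis
    unfolding red_splitting_set_with_def splitting_set_with_def red_sep_def proper_sep_def
    by (auto simp: reducible_with_def balanced_pair_iff)
qed

text \<open>Keep one edge e of M as separator and split the rest into the copies of x and the other edges.\<close>

lemma diagonal_proper_splitting_set:
  assumes "set_mset M \<subseteq> E" "3 \<le> size M" "x \<in># M" "y \<in># M" "x \<noteq> y"
  shows "\<exists>T. proper_splitting_set E (M, M) T"
proof -
  define R0 where "R0 = M - {#x#} - {#y#}"
  have y: "y \<in># M - {#x#}" using assms(4,5) by (simp add: in_diff_count)
  have M: "M = R0 + {#x#} + {#y#}"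
    unfolding R0_def using insert_DiffM2[OF y] insert_DiffM2[OF assms(3)]
    by (metis add.assoc add.commute)
  then have "R0 \<noteq> {#}" using assms(2) by (auto simp: numeral_3_eq_3)
  then obtain e where e: "e \<in># R0" by blast
  define M' where "M' = R0 - {#e#} + {#x#} + {#y#}"
  define S where "S = {#e#}"
  define A where "A = filter_mset (\<lambda>t. t = x) M'"
  define C where "C = filter_mset (\<lambda>t. t \<noteq> x) M'"
  have M_split: "M = A + C + S"
    unfolding A_def C_def S_def multiset_partition[symmetric] M'_def using M e by (simp add: ac_simps)
  have "x \<in># A" "y \<in># C" "y \<notin># A" "x \<notin># C"
    using assms(5) by (simp_all add: A_def C_def) (simp_all add: M'_def)
  moreover have "set_mset (A + C + S) \<subseteq> E" using assms(1) M_split by simp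
  moreover have "S = (A + S) \<inter># (C + S)"
    by (rule multiset_eqI) (auto simp: A_def C_def)
  ultimately have "reducible_with E (add_both (M, M) S) (A + S, A + S) S (C + S, C + S)"
    using assms(3,4) unfolding reducible_with_def add_both_def M_split
    by (auto simp: balanced_pair_iff bsupp_def S_def ac_simps)
  moreover have "proper_sep (A + S, A + S) S (C + S, C + S)"
    using \<open>x \<in># A\<close> \<open>y \<in># C\<close> by (auto simp: proper_sep_def subset_mset.less_le)
  ultimately have "proper_splitting_set E (M, M) S"
    unfolding proper_splitting_set_def splitting_set_with_def
    using assms(1) M_split by (auto simp: S_def)
  then show ?thesis ..
qed

lemma diagonal_meet_or_proper_splitting:
  assumes "set_mset M \<subseteq> E" "3 \<le> size M" "S \<subseteq># M" "R \<subseteq># M" "S \<noteq> {#}" "R \<noteq> {#}"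
  shows "S \<inter># R \<noteq> {#} \<or> (\<exists>T. proper_splitting_set E (M, M) T)"
proof (cases "S \<inter># R = {#}")
  case True
  obtain x y where "x \<in># S" "y \<in># R" using assms(5,6) by (meson multiset_nonemptyE)
  with True have "x \<noteq> y"
    by (metis empty_iff set_mset_empty Multiset.set_mset_inter IntI)
  with \<open>x \<in># S\<close> \<open>y \<in># R\<close> assms(1-4) show ?thesis
    using diagonal_proper_splitting_set[of M E x y] by (auto dest: mset_subset_eqD)
qed simp

lemma primitive_blue_neq_red:
  assumes "primitive E (B, R)" "2 \<le> size B"
  shows "B \<noteq> R"
proof
  assume "B = R"
  from assms(2) have "B \<noteq> {#}" by auto
  then obtain x where "x \<in># B" by blast
  moreover have "{#x#} \<noteq> B" using assms(2) by auto
  ultimately have "{#x#} \<subset># B" by (simp add: subset_mset.less_le)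
  moreover have "balanced E ({#x#}, {#x#})"
    using assms(1) \<open>x \<in># B\<close> by (auto simp: primitive_def balanced_pair_iff)
  ultimately have "\<exists>W. balanced E W \<and> W \<noteq> ({#}, {#}) \<and> W \<noteq> (B, R) \<and> blue W \<subset># B \<and> red W \<subset># R"
    using \<open>B = R\<close> by (intro exI[of _ "({#x#}, {#x#})"]) auto
  moreover have "\<not> (\<exists>W. balanced E W \<and> W \<noteq> ({#}, {#}) \<and> W \<noteq> (B, R) \<and> blue W \<subset># B \<and> red W \<subset># R)"
    using assms(1) unfolding primitive_def by simp
  ultimately show False by contradiction
qed

context uniform_hypergraph
begin

lemma coeff_sum_low_generator:
  fixes g :: "'k::field tpoly"
  assumes a: "Poly_Mapping.keys a \<subseteq> E" and g: "g \<in> toric_ideal E" "tdeg g \<le> d"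
    and closed: "\<And>a b. a \<in> C \<Longrightarrow> low_move E d (mset_of_monom a) (mset_of_monom b) \<Longrightarrow> b \<in> C"
  shows "coeff_sum {b. a + b \<in> C} g = 0"
proof -
  text \<open>As C is closed under moves, Q is a union of fibres of edge_mon_image on the monomials
    of g, and the coefficients of g sum to zero over each fibre.\<close>
  define Q where "Q = {b \<in> Poly_Mapping.keys g. a + b \<in> C}"
  have "coeff_sum {b. a + b \<in> C} g = (\<Sum>b\<in>Q. Poly_Mapping.lookup g b)"
    unfolding coeff_sum_def Q_def by (simp add: sum.inter_filter)
  also have "\<dots> = (\<Sum>y\<in>edge_mon_image ` Q. \<Sum>b\<in>{b \<in> Q. edge_mon_image b = y}. Poly_Mapping.lookup g b)"
    by (rule sum.image_gen) (simp add: Q_def)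
  also have "\<dots> = 0"
  proof (rule sum.neutral, rule ballI)
    fix y assume "y \<in> edge_mon_image ` Q"
    then obtain b0 where b0: "b0 \<in> Q" "edge_mon_image b0 = y" by blast
    have "{b \<in> Q. edge_mon_image b = y} = {b \<in> Poly_Mapping.keys g. edge_mon_image b = y}"
    proof (intro Collect_cong iffI)
      fix b assume b: "b \<in> Poly_Mapping.keys g \<and> edge_mon_image b = y"
      have in_E: "Poly_Mapping.keys b0 \<subseteq> E" "Poly_Mapping.keys b \<subseteq> E"
        using b b0 keys_subset_if_tpoly_ring[of g E] g(1) by (auto simp: toric_ideal_def Q_def)
      have "size (mset_of_monom b0) \<le> d"
        using tdeg_ge[of b0 g] g(2) b0(1) by (simp add: Q_def mon_deg_eq_size)
      with a in_E b b0 have "move_via E d (mset_of_monom (a + b0)) (mset_of_monom (a + b))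
          (mset_of_monom a) (mset_of_monom b0) (mset_of_monom b)"
        using edge_mon_image_monom_eq_iff[of "mset_of_monom b0" "mset_of_monom b"]
        by (simp add: move_via_def mset_of_monom_plus balanced_pair_iff)
      with b0 b show "b \<in> Q \<and> edge_mon_image b = y"
        using closed[of "a + b0" "a + b"] by (auto simp: Q_def low_move_def)
    qed (simp add: Q_def)
    then show "(\<Sum>b\<in>{b \<in> Q. edge_mon_image b = y}. Poly_Mapping.lookup g b) = 0"
      using g(1) lookup_push_keys[of edge_mon_image g y]
      by (simp add: toric_ideal_def toric_map_eq_push_keys)
  qed
  finally show ?thesis .
qed

lemma coeff_sum_mult_low_generator:
  fixes c g :: "'k::field tpoly"
  assumes c: "c \<in> tpoly_ring E" and g: "g \<in> toric_ideal E" "tdeg g \<le> d"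
    and closed: "\<And>a b. a \<in> C \<Longrightarrow> low_move E d (mset_of_monom a) (mset_of_monom b) \<Longrightarrow> b \<in> C"
  shows "coeff_sum C (c * g) = 0"
proof -
  have "coeff_sum C (c * g) = (\<Sum>a\<in>Poly_Mapping.keys c. \<Sum>b\<in>Poly_Mapping.keys g.
      if a + b \<in> C then Poly_Mapping.lookup c a * Poly_Mapping.lookup g b else 0)"
    by (subst poly_mapping_mult_expand) (simp add: coeff_sum_sum coeff_sum_single)
  also have "\<dots> = (\<Sum>a\<in>Poly_Mapping.keys c. Poly_Mapping.lookup c a * coeff_sum {b. a + b \<in> C} g)"
    unfolding coeff_sum_def sum_distrib_left by (intro sum.cong refl) simp
  also have "\<dots> = 0"
    using coeff_sum_low_generator[OF keys_subset_if_tpoly_ring[OF c] g closed] by simp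
  finally show ?thesis .
qed

lemma low_moves_if_generated:
  assumes "generated_in_degree_at_most E d TYPE('k::field)" and bal: "balanced E (B, R)"
  shows "(low_move E d)\<^sup>*\<^sup>* B R"
proof -
  define C where "C = {a. (low_move E d)\<^sup>*\<^sup>* B (mset_of_monom a)}"
  have "(tmonom B - tmonom R :: 'k tpoly) \<in> low_degree_ideal E d"
    using binomial_in_toric_ideal[OF bal] assms(1) unfolding generated_in_degree_at_most_def by simp
  then obtain F c where F: "F \<subseteq> {p \<in> toric_ideal E. tdeg p \<le> d}" "\<forall>g\<in>F. c g \<in> tpoly_ring E"
    and BR: "(tmonom B - tmonom R :: 'k tpoly) = (\<Sum>g\<in>F. c g * g)"
    unfolding ideal_gen_in_def by blast
  text \<open>Summing coefficients over the monomials reachable from B gives 0 on the generator side,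
    but 1 - [R reachable] on the binomial side.\<close>
  have "coeff_sum C (tmonom B - tmonom R :: 'k tpoly) = (\<Sum>g\<in>F. coeff_sum C (c g * g))"
    unfolding BR by (rule coeff_sum_sum)
  also have "\<dots> = 0"
  proof (rule sum.neutral, rule ballI)
    fix g assume "g \<in> F"
    with F show "coeff_sum C (c g * g) = 0"
      by (intro coeff_sum_mult_low_generator[where d = d])
        (auto simp: C_def intro: rtranclp.rtrancl_into_rtrancl)
  qed
  finally have "coeff_sum C (tmonom B - tmonom R :: 'k tpoly) = 0" .
  moreover have "monom_of_mset B \<in> C" by (simp add: C_def)
  ultimately have "monom_of_mset R \<in> C"
    by (simp add: tmonom_def coeff_sum_diff coeff_sum_single split: if_splits)
  then show ?thesis by (simp add: C_def)
qed

lemma nontrivial_move: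
  assumes "low_move E d A A'" "set_mset A \<subseteq> E" "A \<noteq> {#}" "d \<ge> 1"
  obtains w u v where "move_via E d A A' w u v" "u \<noteq> {#}" "v \<noteq> {#}"
proof -
  obtain w u v where move: "move_via E d A A' w u v"
    using assms(1) unfolding low_move_def by blast
  show ?thesis
  proof (cases "u = {#}")
    case False
    with move empty_iff_if_balanced[of u v] have "v \<noteq> {#}" by (simp add: move_via_def)
    with move False show ?thesis by (rule that)
  next
    case True
    text \<open>A trivial move is replaced by exchanging a single edge of A for itself.\<close>
    with move empty_iff_if_balanced have "A' = A" by (auto simp: move_via_def)
    obtain e where "e \<in># A" using \<open>A \<noteq> {#}\<close> by blast
    with assms(2,4) \<open>A' = A\<close> have "move_via E d A A' (A - {#e#}) {#e#} {#e#}"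
      by (auto simp: move_via_def balanced_pair_iff dest: in_diffD)
    then show ?thesis by (rule that) simp_all
  qed
qed

lemma eq_if_balanced_size_le_1:
  assumes bal: "balanced E (u, v)" and "size u \<le> 1"
  shows "u = v"
proof (cases "u = {#}")
  case True
  with empty_iff_if_balanced[OF bal] show ?thesis by simp
next
  case False
  with \<open>size u \<le> 1\<close> obtain x where x: "u = {#x#}"
    by (metis le_SucE le_zero_eq One_nat_def size_1_singleton_mset size_eq_0_iff_empty)
  moreover obtain y where y: "v = {#y#}"
    using size_eq_if_balanced[OF bal] x by (metis size_single size_1_singleton_mset)
  moreover have "(j \<in> x) = (j \<in> y)" for j
    using bal x y by (simp add: balanced_pair_iff vdeg_add_mset split: if_splits) (metis one_neq_zero)
  ultimately show ?thesis by blast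
qed

lemma low_moves_trivial:
  assumes "(low_move E d)\<^sup>*\<^sup>* A A'" "d \<le> 1"
  shows "A = A'"
  using assms
proof (induction rule: rtranclp_induct)
  case (step y z)
  then obtain w u v where move: "move_via E d y z w u v" unfolding low_move_def by blast
  with \<open>d \<le> 1\<close> have "u = v"
    by (intro eq_if_balanced_size_le_1) (auto simp: move_via_def)
  with move step show ?case by (simp add: move_via_def)
qed simp

text \<open>Padding with trivial moves at the end makes the path length even.\<close>

lemma even_move_path:
  assumes path: "(low_move E d)\<^sup>*\<^sup>* B R" and "B \<noteq> R" "set_mset B \<subseteq> E" "B \<noteq> {#}" "d \<ge> 1"
  obtains K g w u v where "K \<ge> 1" "g 0 = B" "g (2 * K) = R" "\<And>i. balanced E (B, g i)"
    "\<And>i. i < 2 * K \<Longrightarrow> move_via E d (g i) (g (Suc i)) (w i) (u i) (v i) \<and> u i \<noteq> {#} \<and> v i \<noteq> {#}"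
proof -
  obtain L f where f: "f 0 = B" "f L = R" "\<And>i. i < L \<Longrightarrow> low_move E d (f i) (f (Suc i))"
    using path unfolding rtranclp_power relpowp_fun_conv by blast
  define K where "K = (L + 1) div 2"
  define g where "g i = (if i \<le> L then f i else R)" for i
  have "(low_move E d)\<^sup>*\<^sup>* B (f i)" if "i \<le> L" for i
    using that
  proof (induction i)
    case (Suc i)
    then show ?case using f(3)[of i] by (simp add: rtranclp.rtrancl_into_rtrancl)
  qed (simp add: f(1))
  then have "(low_move E d)\<^sup>*\<^sup>* B (g i)" for i
    by (simp add: g_def path)
  then have bal: "balanced E (B, g i)" for i
    using balanced_if_low_moves \<open>set_mset B \<subseteq> E\<close> by blast
  have "L \<noteq> 0" using f(1,2) \<open>B \<noteq> R\<close> by metis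
  then have "K \<ge> 1" "L \<le> 2 * K" by (auto simp: K_def)
  have "low_move E d (g i) (g (Suc i))" for i
  proof (cases "i < L")
    case False
    with f(2) have "g i = R" "g (Suc i) = R" by (auto simp: g_def)
    with bal[of i] show ?thesis by (simp add: low_move_refl balanced_pair_iff)
  qed (simp add: g_def f(3))
  moreover have "g i \<noteq> {#}" for i
    using bal[of i] empty_iff_if_balanced \<open>B \<noteq> {#}\<close> by blast
  ultimately have "\<exists>w u v. move_via E d (g i) (g (Suc i)) w u v \<and> u \<noteq> {#} \<and> v \<noteq> {#}" for i
    using bal[of i] \<open>d \<ge> 1\<close> by (metis nontrivial_move balanced_pair_iff)
  then obtain w u v where "\<And>i. move_via E d (g i) (g (Suc i)) (w i) (u i) (v i) \<and> u i \<noteq> {#} \<and> v i \<noteq> {#}"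
    by metis
  moreover have "g 0 = B" "g (2 * K) = R" using f \<open>L \<le> 2 * K\<close> by (auto simp: g_def K_def)
  ultimately show ?thesis using that \<open>K \<ge> 1\<close> bal by blast
qed

text \<open>The i-th walk of the chain is (g i, g (2K - i)): its blue splitting set is the part added by the
  i-th move, its red splitting set the part removed by the (2K - i + 1)-st move.\<close>

lemma splitting_chain_if_move_path:
  assumes "K \<ge> 1" "g 0 = B" "g (2 * K) = R" and bal: "\<And>i. balanced E (B, g i)"
    and moves: "\<And>i. i < 2 * K \<Longrightarrow>
      move_via E d (g i) (g (Suc i)) (w i) (u i) (v i) \<and> u i \<noteq> {#} \<and> v i \<noteq> {#}"
    and "size B = n" "d < n" "3 \<le> n"
  shows "splitting_chain E (B, R) n"
proof -
  define \<Gamma>1 where "\<Gamma>1 i = (u (i - 1), v (i - 1))" for i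
  define \<Gamma>2 where "\<Gamma>2 i = (g i, g (2 * K - (i - 1)))" for i
  define \<Upsilon>1 where "\<Upsilon>1 i = (g (i - 1), g (2 * K - i))" for i
  define \<Upsilon>2 where "\<Upsilon>2 i = (u (2 * K - i), v (2 * K - i))" for i
  define S where "S i = v (i - 1)" for i
  define R' where "R' i = u (2 * K - i)" for i
  have walk: "chain_walk (B, R) \<Gamma>2 \<Upsilon>1 i = (g i, g (2 * K - i))" for i
    using assms(2,3) by (simp add: chain_walk_def \<Gamma>2_def \<Upsilon>1_def)
  have size_g: "size (g i) = n" for i
    using size_eq_if_balanced[OF bal[of i]] \<open>size B = n\<close> by simp
  have bal_g: "balanced E (g i, g j)" for i j
    using bal[of i] bal[of j] by (simp add: balanced_pair_iff)
  have small: "size (u i) < n" "size (v i) < n" if "i < 2 * K" for i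
    using moves[OF that] size_eq_if_balanced[of "u i" "v i"] \<open>d < n\<close>
    by (auto simp: move_via_def)
  have "blue_splitting_set_with E (chain_walk (B, R) \<Gamma>2 \<Upsilon>1 (i - 1)) (\<Gamma>1 i) (S i) (\<Gamma>2 i) \<and>
      red_splitting_set_with E (chain_walk (B, R) \<Gamma>2 \<Upsilon>1 (i - 1)) (\<Upsilon>1 i) (R' i) (\<Upsilon>2 i) \<and>
      size (S i) < n \<and> size (R' i) < n" if "i \<in> {1..K}" for i
  proof -
    have i: "i - 1 < 2 * K" "2 * K - i < 2 * K" "Suc (i - 1) = i" "Suc (2 * K - i) = 2 * K - (i - 1)"
      using that by auto
    have m1: "move_via E d (g (i - 1)) (g i) (w (i - 1)) (u (i - 1)) (v (i - 1))" "v (i - 1) \<noteq> {#}"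
      using moves[OF i(1)] i(3) by auto
    have m2: "move_via E d (g (2 * K - i)) (g (2 * K - (i - 1))) (w (2 * K - i)) (u (2 * K - i)) (v (2 * K - i))"
      "u (2 * K - i) \<noteq> {#}"
      using moves[OF i(2)] i(4) by auto
    have "g (i - 1) \<noteq> {#}" using size_g[of "i - 1"] \<open>3 \<le> n\<close> by auto
    have "blue_splitting_set_with E (g (i - 1), g (2 * K - (i - 1))) (\<Gamma>1 i) (S i) (\<Gamma>2 i)"
      using move_blue_splitting_set[OF bal_g m1] small[OF i(1)] size_g
      by (simp add: \<Gamma>1_def \<Gamma>2_def S_def)
    moreover have "red_splitting_set_with E (g (i - 1), g (2 * K - (i - 1))) (\<Upsilon>1 i) (R' i) (\<Upsilon>2 i)"
      using move_red_splitting_set[OF bal_g m2 \<open>g (i - 1) \<noteq> {#}\<close>]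
      by (simp add: \<Upsilon>1_def \<Upsilon>2_def R'_def)
    ultimately show ?thesis
      using walk small[OF i(1)] small[OF i(2)] by (simp add: S_def R'_def)
  qed
  moreover have "S K \<inter># R' K \<noteq> {#} \<or> (\<exists>T. proper_splitting_set E (chain_walk (B, R) \<Gamma>2 \<Upsilon>1 K) T)"
  proof -
    have K: "K - 1 < 2 * K" "K < 2 * K" "Suc (K - 1) = K" "2 * K - K = K" using \<open>K \<ge> 1\<close> by auto
    have "g K = w (K - 1) + v (K - 1)" "g K = w K + u K"
      using moves[OF K(1)] moves[OF K(2)] K(3) by (auto simp: move_via_def)
    then have "S K \<subseteq># g K" "R' K \<subseteq># g K"
      unfolding S_def R'_def K(4) by (metis mset_subset_eq_add_right)+
    moreover have "S K \<noteq> {#}" "R' K \<noteq> {#}"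
      using moves[OF K(1)] moves[OF K(2)] K(4) by (simp_all add: S_def R'_def)
    ultimately show ?thesis
      using diagonal_meet_or_proper_splitting[of "g K"] bal_g[of K K] size_g[of K] \<open>3 \<le> n\<close>
        walk[of K] K(4)
      by (simp add: balanced_pair_iff)
  qed
  ultimately show ?thesis
    unfolding splitting_chain_def using \<open>K \<ge> 1\<close> by blast
qed

lemma splitting_chain_if_generated:
  assumes gen: "generated_in_degree_at_most E d TYPE('k::field)" and "d > 0"
    and prim: "primitive E W" and "bsize W = 2 * n" and "d < n"
  shows "splitting_chain E W n"
proof -
  obtain B R where W: "W = (B, R)" by fastforce
  have bal: "balanced E (B, R)" using prim by (simp add: primitive_def W)
  have "size B = n"
    using size_eq_if_balanced[OF bal] \<open>bsize W = 2 * n\<close> by (simp add: W bsize_def)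
  have "B \<noteq> R"
    using primitive_blue_neq_red prim \<open>size B = n\<close> \<open>d < n\<close> \<open>d > 0\<close> by (simp add: W)
  have path: "(low_move E d)\<^sup>*\<^sup>* B R" by (rule low_moves_if_generated[OF gen bal])
  have "3 \<le> n"
  proof (rule ccontr)
    assume "\<not> 3 \<le> n"
    with \<open>d < n\<close> have "d \<le> 1" by simp
    with low_moves_trivial[OF path] \<open>B \<noteq> R\<close> show False by blast
  qed
  moreover have "set_mset B \<subseteq> E" "B \<noteq> {#}"
    using bal \<open>size B = n\<close> \<open>d < n\<close> by (auto simp: balanced_pair_iff)
  ultimately obtain K g w u v where "K \<ge> 1" "g 0 = B" "g (2 * K) = R" "\<And>i. balanced E (B, g i)"
    "\<And>i. i < 2 * K \<Longrightarrow> move_via E d (g i) (g (Suc i)) (w i) (u i) (v i) \<and> u i \<noteq> {#} \<and> v i \<noteq> {#}"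
    using even_move_path[OF path \<open>B \<noteq> R\<close>] \<open>d > 0\<close> by (metis One_nat_def Suc_leI)
  from splitting_chain_if_move_path[OF this \<open>size B = n\<close> \<open>d < n\<close> \<open>3 \<le> n\<close>]
  show ?thesis by (simp add: W)
qed

end

theorem theorem5p1:
  fixes m k d :: nat and E :: "nat set set"
  assumes "hypergraph m E" and "uniform k E" and "d > 0"
  shows "generated_in_degree_at_most E d TYPE('k::field) \<longleftrightarrow>
    (\<forall>W n. primitive E W \<and> bsupp W \<subseteq> E \<and> bsize W = 2 * n \<and> n > d \<longrightarrow>
       (\<exists>S. proper_splitting_set E W S) \<or> splitting_chain E W n)"
proof -
  interpret uniform_hypergraph m k E
    using assms(1,2) by unfold_locales
  have "generated_in_degree_at_most E d TYPE('k) \<longleftrightarrow> long_primitive_walks_split E d"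
    using generated_if_walks_split splitting_chain_if_generated[OF _ \<open>d > 0\<close>]
    unfolding long_primitive_walks_split_def by blast
  then show ?thesis
    unfolding long_primitive_walks_split_def .
qed

end
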